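(* Let $w\in S_n$ be inverse fireworks. For each $r\in[n]$, $\mathsf{rajcode}(w)_r=\left|\{r'>r:\ (r,r')\in\mathsf{Inv}(w),\ \text{or } \big(w(r')>w(r)\text{ and }(r',r'')\in\mathsf{Inv}(w)\text{ for some }r''\big)\}\right|.$
   Context: A permutation is fireworks if the initial elements of its maximal decreasing runs (in one-line notation) are increasing; $w$ is inverse fireworks if $w^{-1}$ is fireworks. $\mathsf{Inv}(w)=\{(i,j):i<j,w(i)>w(j)\}$. $\mathrm{LIS}^w(q)$ is the length of the longest increasing subsequence of $w$ starting with $q$, and $\mathsf{rajcode}(w)_r=n+1-r-\mathrm{LIS}^w(w(r))$ for $r\in[n]$. *)

theory Defs
  imports "HOL-Combinatorics.Permutations"
begin

text \<open>Permutations of [n] = {1..n} are functions w :: nat => nat with w permutes {1..n};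
  one-line notation is w(1) w(2) ... w(n).\<close>

definition run_start :: "(nat \<Rightarrow> nat) \<Rightarrow> nat \<Rightarrow> nat \<Rightarrow> bool" where
  "run_start w n i \<longleftrightarrow> 1 \<le> i \<and> i \<le> n \<and> (i = 1 \<or> w (i - 1) < w i)"

definition fireworks :: "(nat \<Rightarrow> nat) \<Rightarrow> nat \<Rightarrow> bool" where
  "fireworks w n \<longleftrightarrow>
     (\<forall>i j. run_start w n i \<and> run_start w n j \<and> i < j \<longrightarrow> w i < w j)"

definition inverse_fireworks :: "(nat \<Rightarrow> nat) \<Rightarrow> nat \<Rightarrow> bool" where
  "inverse_fireworks w n \<longleftrightarrow> fireworks (inv w) n"

definition Inv :: "(nat \<Rightarrow> nat) \<Rightarrow> nat \<Rightarrow> (nat \<times> nat) set" where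
  "Inv w n = {(i, j). 1 \<le> i \<and> i < j \<and> j \<le> n \<and> w i > w j}"

definition LIS :: "(nat \<Rightarrow> nat) \<Rightarrow> nat \<Rightarrow> nat \<Rightarrow> nat" where
  "LIS w n q = (let p = inv_into {1..n} w q in
     Max {card S | S. S \<subseteq> {p..n} \<and> p \<in> S \<and> strict_mono_on S w})"

definition rajcode :: "(nat \<Rightarrow> nat) \<Rightarrow> nat \<Rightarrow> nat \<Rightarrow> int" where
  "rajcode w n r = int n + 1 - int r - int (LIS w n (w r))"

end

theory Submission
  imports Defs
begin

(* Let u = w^-1, which is fireworks. As the run starts of u increase and u decreases within each
   run, the run starts of u are exactly its strict prefix maxima. Consequently, for r' > r with
   w(r') > w(r), the absence of an inversion (r', r'') means precisely that w(r') is a run start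
   of u after w(r); these are the positions in {r+1..n} not counted on the right-hand side.
   On the other side, transposing the graph turns increasing subsequences of w starting at r into
   increasing subsequences of u starting at w(r). Such a subsequence meets every run at most once,
   and apart from its first entry only runs starting after w(r); conversely w(r) followed by all
   later run starts is increasing. Hence LIS^w(w(r)) = 1 + #{run starts of u after w(r)}. *)

definition run_head :: "(nat \<Rightarrow> nat) \<Rightarrow> nat \<Rightarrow> nat \<Rightarrow> nat" where
  "run_head u n x = Max {a. run_start u n a \<and> a \<le> x}"

lemma
  assumes "x \<in> {1..n}"
  shows run_start_run_head: "run_start u n (run_head u n x)"
    and run_head_le: "run_head u n x \<le> x"
    and not_run_start_after_run_head:
      "\<And>c. run_head u n x < c \<Longrightarrow> c \<le> x \<Longrightarrow> \<not> run_start u n c"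
proof -
  let ?A = "{a. run_start u n a \<and> a \<le> x}"
  have "finite ?A" unfolding run_start_def by auto
  moreover have "1 \<in> ?A" using assms unfolding run_start_def by auto
  ultimately have "run_head u n x \<in> ?A" and "\<And>c. c \<in> ?A \<Longrightarrow> c \<le> run_head u n x"
    unfolding run_head_def using Max_in Max_ge by blast+
  then show "run_start u n (run_head u n x)" "run_head u n x \<le> x"
    "\<And>c. run_head u n x < c \<Longrightarrow> c \<le> x \<Longrightarrow> \<not> run_start u n c"
    by force+
qed

lemma decreasing_within_run:
  assumes "y \<in> {1..n}" and "run_head u n y \<le> x" and "x \<le> y"
  shows "u y \<le> u x"
  using \<open>x \<le> y\<close>
proof (induction y rule: dec_induct)
  case base
  show ?case by simp
next
  case (step k)
  have "1 \<le> run_head u n y"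
    using run_start_run_head[OF assms(1)] unfolding run_start_def by simp
  then have "\<not> run_start u n (Suc k)"
    using not_run_start_after_run_head[OF assms(1)] assms(2) step.hyps by simp
  then have "u (Suc k) \<le> u k"
    using step.hyps assms unfolding run_start_def by auto
  with step.IH show ?case by simp
qed

lemma run_start_prefix_max:
  assumes "fireworks u n" and "run_start u n a" and "1 \<le> b" and "b < a"
  shows "u b < u a"
proof -
  have b: "b \<in> {1..n}" using assms(2-4) unfolding run_start_def by simp
  have "u b \<le> u (run_head u n b)"
    using decreasing_within_run[OF b] run_head_le[OF b] by simp
  also have "\<dots> < u a"
    using assms(1,2,4) run_start_run_head[OF b, of u] run_head_le[OF b, of u]
    unfolding fireworks_def by simp
  finally show ?thesis .
qed

lemma run_start_iff_prefix_max:
  assumes "fireworks u n" and "a \<in> {1..n}"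
  shows "run_start u n a \<longleftrightarrow> (\<forall>b. 1 \<le> b \<and> b < a \<longrightarrow> u b < u a)"
proof
  assume "\<forall>b. 1 \<le> b \<and> b < a \<longrightarrow> u b < u a"
  then have "a = 1 \<or> u (a - 1) < u a" using assms(2) by (cases "a = 1") auto
  then show "run_start u n a" using assms(2) unfolding run_start_def by simp
qed (use run_start_prefix_max[OF assms(1)] in blast)

definition run_starts_after :: "(nat \<Rightarrow> nat) \<Rightarrow> nat \<Rightarrow> nat \<Rightarrow> nat set" where
  "run_starts_after u n q = {a. run_start u n a \<and> q < a}"

lemma run_starts_after_subset: "run_starts_after u n q \<subseteq> {1..n}"
  unfolding run_starts_after_def run_start_def by auto

lemma finite_run_starts_after [simp]: "finite (run_starts_after u n q)"
  using finite_subset[OF run_starts_after_subset] by blast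

definition increasing_from :: "(nat \<Rightarrow> nat) \<Rightarrow> nat \<Rightarrow> nat \<Rightarrow> nat set \<Rightarrow> bool" where
  "increasing_from u n p S \<longleftrightarrow> S \<subseteq> {p..n} \<and> p \<in> S \<and> strict_mono_on S u"

lemma LIS_eq_Max_increasing_from:
  "LIS w n q = Max {card S | S. increasing_from w n (inv_into {1..n} w q) S}"
  unfolding LIS_def increasing_from_def Let_def ..

lemma card_increasing_from_le:
  assumes inc: "increasing_from u n q T"
  shows "card T \<le> Suc (card (run_starts_after u n q))"
proof -
  have T: "T \<subseteq> {q..n}" "q \<in> T" and mono: "strict_mono_on T u"
    using inc unfolding increasing_from_def by auto
  have later: "x \<in> {1..n}" "q < x" "u q < u x" if "x \<in> T - {q}" for x
    using that T strict_mono_onD[OF mono] by auto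
  have "run_head u n x \<in> run_starts_after u n q" if x: "x \<in> T - {q}" for x
  proof -
    have "\<not> run_head u n x \<le> q"
      using decreasing_within_run[OF later(1)[OF x], where u = u and x = q] later[OF x] by auto
    then show ?thesis
      using run_start_run_head[OF later(1)[OF x]] unfolding run_starts_after_def by simp
  qed
  moreover have "inj_on (run_head u n) (T - {q})"
  proof (rule linorder_inj_onI')
    fix x y assume x: "x \<in> T - {q}" and y: "y \<in> T - {q}" and "x < y"
    then have "u x < u y" using strict_mono_onD[OF mono] by blast
    then show "run_head u n x \<noteq> run_head u n y"
      using decreasing_within_run[OF later(1)[OF y], where u = u and x = x]
        run_head_le[OF later(1)[OF x], where u = u] \<open>x < y\<close>
      by fastforce
  qed
  ultimately have "card (T - {q}) \<le> card (run_starts_after u n q)"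
    by (intro card_inj_on_le) auto
  moreover have "finite T" using T(1) finite_subset by blast
  ultimately show ?thesis using T(2) by (simp add: card_Diff_singleton)
qed

lemma increasing_from_run_starts:
  assumes fw: "fireworks u n" and q: "q \<in> {1..n}"
  shows "increasing_from u n q (insert q (run_starts_after u n q))"
  unfolding increasing_from_def
proof (intro conjI)
  show "insert q (run_starts_after u n q) \<subseteq> {q..n}"
    using q run_starts_after_subset unfolding run_starts_after_def by fastforce
  show "strict_mono_on (insert q (run_starts_after u n q)) u"
  proof (rule strict_mono_onI)
    fix x y
    assume "x \<in> insert q (run_starts_after u n q)" "y \<in> insert q (run_starts_after u n q)"
      and "x < y"
    then have "run_start u n y" "1 \<le> x" "x < y"
      using q run_starts_after_subset unfolding run_starts_after_def by auto
    then show "u x < u y" by (rule run_start_prefix_max[OF fw])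
  qed
qed simp

lemma Max_card_increasing_from:
  assumes fw: "fireworks u n" and q: "q \<in> {1..n}"
  shows "Max {card T | T. increasing_from u n q T} = Suc (card (run_starts_after u n q))"
proof (rule Max_eqI)
  have le: "card T \<le> Suc (card (run_starts_after u n q))" if "increasing_from u n q T" for T
    using card_increasing_from_le that by simp
  then show "finite {card T | T. increasing_from u n q T}"
    by (intro finite_subset[OF _ finite_atMost]) blast
  show "c \<le> Suc (card (run_starts_after u n q))"
    if "c \<in> {card T | T. increasing_from u n q T}" for c
    using that le by blast
  have "q \<notin> run_starts_after u n q" unfolding run_starts_after_def by simp
  then have "card (insert q (run_starts_after u n q)) = Suc (card (run_starts_after u n q))"
    by simp
  then show "Suc (card (run_starts_after u n q)) \<in> {card T | T. increasing_from u n q T}"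
    using increasing_from_run_starts[OF fw q]
    by (intro CollectI exI[of _ "insert q (run_starts_after u n q)"]) simp
qed

lemma run_start_inv_iff_no_inversion:
  assumes w: "w permutes {1..n}" and "inverse_fireworks w n" and r: "r \<in> {1..n}"
  shows "run_start (inv w) n (w r) \<longleftrightarrow> \<not> (\<exists>r'. (r, r') \<in> Inv w n)"
proof -
  have fw: "fireworks (inv w) n" using assms(2) unfolding inverse_fireworks_def .
  have inv_w: "inv w (w x) = x" "w (inv w x) = x" for x
    using permutes_inverses[OF w] by auto
  have in_range:
    "w x \<in> {1..n} \<longleftrightarrow> x \<in> {1..n}" "inv w x \<in> {1..n} \<longleftrightarrow> x \<in> {1..n}" for x
    using permutes_in_image[OF w] permutes_in_image[OF permutes_inv[OF w]] by auto
  have run_start_iff: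
    "run_start (inv w) n (w r) \<longleftrightarrow> (\<forall>b. 1 \<le> b \<and> b < w r \<longrightarrow> inv w b < r)"
    using run_start_iff_prefix_max[OF fw, of "w r"] in_range r by (simp add: inv_w)
  show ?thesis
  proof
    assume "run_start (inv w) n (w r)"
    show "\<not> (\<exists>r'. (r, r') \<in> Inv w n)"
    proof
      assume "\<exists>r'. (r, r') \<in> Inv w n"
      then obtain r' where r': "r < r'" "r' \<le> n" "w r' < w r" unfolding Inv_def by auto
      have "1 \<le> w r'" using in_range(1)[of r'] r r' by simp
      with r' have "r' < r"
        using \<open>run_start (inv w) n (w r)\<close> run_start_iff by (metis inv_w(1))
      with r' show False by simp
    qed
  next
    assume no_inv: "\<not> (\<exists>r'. (r, r') \<in> Inv w n)"
    have "inv w b < r" if b: "1 \<le> b" "b < w r" for b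
    proof -
      have "b \<le> n" using b in_range(1)[of r] r by simp
      then have ib: "inv w b \<in> {1..n}" using in_range(2)[of b] b by simp
      have "inv w b \<noteq> r" using b inv_w(2)[of b] by auto
      moreover have "\<not> r < inv w b"
        using no_inv ib b r inv_w(2)[of b] unfolding Inv_def by auto
      ultimately show ?thesis by simp
    qed
    then show "run_start (inv w) n (w r)" using run_start_iff by blast
  qed
qed

lemma card_run_starts_after_inv:
  assumes w: "w permutes {1..n}" and fw: "inverse_fireworks w n" and r: "r \<in> {1..n}"
  shows "card (run_starts_after (inv w) n (w r)) =
    card {r'. r < r' \<and> r' \<le> n \<and> w r < w r' \<and> \<not> (\<exists>r''. (r', r'') \<in> Inv w n)}"
    (is "_ = card ?U")
proof -
  have inv_w: "inv w (w x) = x" "w (inv w x) = x" for x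
    using permutes_inverses[OF w] by auto
  have image_eq: "w ` ?U = run_starts_after (inv w) n (w r)"
  proof (intro equalityI subsetI)
    fix a assume "a \<in> w ` ?U"
    then obtain r' where r': "r' \<in> ?U" "a = w r'" by blast
    then have "r' \<in> {1..n}" using r by auto
    then show "a \<in> run_starts_after (inv w) n (w r)"
      using r' run_start_inv_iff_no_inversion[OF w fw] unfolding run_starts_after_def by auto
  next
    fix a assume a: "a \<in> run_starts_after (inv w) n (w r)"
    define r' where "r' = inv w a"
    have "a \<in> {1..n}" using a run_starts_after_subset by blast
    then have r'_range: "r' \<in> {1..n}" and a_eq: "a = w r'"
      unfolding r'_def using permutes_in_image[OF permutes_inv[OF w]] inv_w by auto
    have "r < r'"
      using run_start_prefix_max[of "inv w" n a "w r"] fw a r permutes_in_image[OF w, of r]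
      unfolding r'_def run_starts_after_def inverse_fireworks_def by (auto simp: inv_w)
    moreover have "\<not> (\<exists>r''. (r', r'') \<in> Inv w n)"
      using run_start_inv_iff_no_inversion[OF w fw r'_range] a a_eq
      unfolding run_starts_after_def by simp
    moreover have "w r < w r'" using a a_eq unfolding run_starts_after_def by simp
    ultimately have "r' \<in> ?U" using r'_range by simp
    with a_eq show "a \<in> w ` ?U" by blast
  qed
  have "inj_on w ?U" using permutes_inj[OF w] inj_on_subset by blast
  then show ?thesis by (simp flip: image_eq add: card_image)
qed

lemma increasing_from_image:
  assumes w: "w permutes {1..n}" and p: "p \<in> {1..n}" and inc: "increasing_from w n p S"
  shows "increasing_from (inv w) n (w p) (w ` S)"
proof -
  have S: "S \<subseteq> {p..n}" "p \<in> S" and mono: "strict_mono_on S w"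
    using inc unfolding increasing_from_def by auto
  have "w x \<in> {w p..n}" if "x \<in> S" for x
  proof -
    have "x \<in> {1..n}" using that S(1) p by auto
    then have "w x \<le> n" using permutes_in_image[OF w, of x] by simp
    moreover have "w p \<le> w x"
      using strict_mono_onD[OF mono S(2) that] S(1) that by (cases "p = x") auto
    ultimately show ?thesis by simp
  qed
  moreover have "strict_mono_on (w ` S) (inv w)"
  proof (rule strict_mono_onI)
    fix a b assume "a \<in> w ` S" "b \<in> w ` S" "a < b"
    then obtain x y where xy: "x \<in> S" "y \<in> S" "a = w x" "b = w y" "w x < w y" by blast
    then have "x < y"
      using strict_mono_onD[OF mono xy(2) xy(1)] by (metis less_asym linorder_neqE_nat)
    then show "inv w a < inv w b"
      using xy permutes_inverses(2)[OF w] by simp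
  qed
  ultimately show ?thesis using S(2) unfolding increasing_from_def by blast
qed

lemma LIS_inverse_fireworks:
  assumes w: "w permutes {1..n}" and fw: "inverse_fireworks w n" and r: "r \<in> {1..n}"
  shows "LIS w n (w r) = Suc (card (run_starts_after (inv w) n (w r)))"
proof -
  have w': "inv w permutes {1..n}" using permutes_inv[OF w] .
  have wr: "w r \<in> {1..n}" using permutes_in_image[OF w] r by simp
  have "inv_into {1..n} w (w r) = r"
    using inv_into_f_f[OF inj_on_subset[OF permutes_inj[OF w]] r] by simp
  moreover have "{card S | S. increasing_from w n r S} =
    {card T | T. increasing_from (inv w) n (w r) T}"
  proof (intro equalityI subsetI)
    fix c assume "c \<in> {card S | S. increasing_from w n r S}"
    then obtain S where S: "c = card S" "increasing_from w n r S" by blast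
    have "card (w ` S) = card S"
      using card_image[OF inj_on_subset[OF permutes_inj[OF w]]] by blast
    with S show "c \<in> {card T | T. increasing_from (inv w) n (w r) T}"
      using increasing_from_image[OF w r S(2)] by (intro CollectI exI[of _ "w ` S"]) simp
  next
    fix c assume "c \<in> {card T | T. increasing_from (inv w) n (w r) T}"
    then obtain T where T: "c = card T" "increasing_from (inv w) n (w r) T" by blast
    have "card (inv w ` T) = card T"
      using card_image[OF inj_on_subset[OF permutes_inj[OF w']]] by blast
    moreover have "increasing_from w n r (inv w ` T)"
      using increasing_from_image[OF w' wr T(2)]
      by (simp add: permutes_inv_inv[OF w] permutes_inverses(2)[OF w])
    ultimately show "c \<in> {card S | S. increasing_from w n r S}"
      using T(1) by (intro CollectI exI[of _ "inv w ` T"]) simp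
  qed
  ultimately show ?thesis
    using Max_card_increasing_from fw wr
    unfolding LIS_eq_Max_increasing_from inverse_fireworks_def by simp
qed

theorem proposition5p9:
  fixes w :: "nat \<Rightarrow> nat" and n r :: nat
  assumes "w permutes {1..n}"
    and "inverse_fireworks w n"
    and "r \<in> {1..n}"
  shows "rajcode w n r = int (card {r'. r < r' \<and> r' \<le> n \<and>
            ((r, r') \<in> Inv w n \<or> (w r' > w r \<and> (\<exists>r''. (r', r'') \<in> Inv w n)))})"
proof -
  define T where "T = {r'. r < r' \<and> r' \<le> n \<and>
            ((r, r') \<in> Inv w n \<or> (w r' > w r \<and> (\<exists>r''. (r', r'') \<in> Inv w n)))}"
  define U where "U = {r'. r < r' \<and> r' \<le> n \<and> w r < w r' \<and> \<not> (\<exists>r''. (r', r'') \<in> Inv w n)}"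
  have "x \<in> T \<union> U" if x: "x \<in> {r<..n}" for x
  proof -
    have "w x \<noteq> w r"
      using x permutes_inj[OF assms(1)] by (metis inj_eq less_irrefl greaterThanAtMost_iff)
    then show ?thesis using x assms(3) unfolding T_def U_def Inv_def by auto
  qed
  moreover have "T \<union> U \<subseteq> {r<..n}" unfolding T_def U_def by auto
  ultimately have "{r<..n} = T \<union> U" by blast
  moreover have "T \<inter> U = {}" unfolding T_def U_def Inv_def by auto
  ultimately have "card T + card U = n - r"
    by (metis card_Un_disjoint card_greaterThanAtMost finite_Un finite_greaterThanAtMost)
  moreover have "LIS w n (w r) = Suc (card U)"
    using LIS_inverse_fireworks[OF assms] card_run_starts_after_inv[OF assms] unfolding U_def
    by simp
  ultimately show ?thesis
    using assms(3) unfolding rajcode_def T_def[symmetric] by (simp, linarith)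
qed

end
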